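(* Let $G$ be a maximal outerplanar graph and $\widetilde{G}$ its reduced graph. In every $B_1$-EPG representation of $G$ (if there is any), the paths corresponding to the three vertices of any triangle in $\widetilde{G}$ form a claw clique.
   Context: A graph is maximal outerplanar if it is outerplanar and adding any single new edge yields a non-outerplanar graph. $S_3$ is the graph with vertices $x_1,x_2,x_3,y_1,y_2,y_3$ and edges $\{x_1,x_2\},\{x_1,x_3\},\{x_2,x_3\},\{x_1,y_1\},\{x_2,y_1\},\{x_2,y_2\},\{x_3,y_2\},\{x_3,y_3\},\{x_1,y_3\}$; its central vertices are $x_1,x_2,x_3$ and its central edges are the three edges among them. A copy of $S_3$ in $G$ is an induced subgraph isomorphic to $S_3$. The reduced graph $\widetilde{G}$ is obtained by coloring, for every copy of $S_3$ in $G$, its central vertices and central edges, and then deleting from $G$ all uncolored vertices and uncolored edges. An EPG representation of a graph is a set of paths on a rectangular grid (sequences of grid points joined consecutively by grid edges), one per vertex, such that two vertices are adjacent iff their paths share a grid edge; it is a $B_1$-EPG representation if every path has at most one bend (point where a horizontal and a vertical grid edge of the path meet). A claw in the grid is a grid point together with three of the grid edges incident to it; a claw clique is the set of all paths that use two of the three edges of some such claw. *)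

theory Defs
  imports "HOL-Analysis.Analysis"
begin

definition simple_graph :: "'v set \<Rightarrow> 'v set set \<Rightarrow> bool" where
  "simple_graph V E \<longleftrightarrow> finite V \<and>
     (\<forall>e\<in>E. \<exists>u v. e = {u, v} \<and> u \<noteq> v \<and> u \<in> V \<and> v \<in> V)"

text \<open>The graph is outerplanar if it has such a drawing where every vertex lies on the
  boundary of the outer (unbounded) face, i.e. in the closure of the unbounded
  component of the complement of the drawing.\<close>

definition drawing_set :: "'v set \<Rightarrow> 'v set set \<Rightarrow> ('v \<Rightarrow> complex) \<Rightarrow> ('v set \<Rightarrow> real \<Rightarrow> complex) \<Rightarrow> complex set" where
  "drawing_set V E pos \<gamma> = pos ` V \<union> (\<Union>e\<in>E. path_image (\<gamma> e))"

definition plane_drawing :: "'v set \<Rightarrow> 'v set set \<Rightarrow> ('v \<Rightarrow> complex) \<Rightarrow> ('v set \<Rightarrow> real \<Rightarrow> complex) \<Rightarrow> bool" where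
  "plane_drawing V E pos \<gamma> \<longleftrightarrow>
     inj_on pos V \<and>
     (\<forall>e\<in>E. arc (\<gamma> e) \<and> {pathstart (\<gamma> e), pathfinish (\<gamma> e)} = pos ` e) \<and>
     (\<forall>e\<in>E. \<forall>v\<in>V. pos v \<in> path_image (\<gamma> e) \<longrightarrow> v \<in> e) \<and>
     (\<forall>e\<in>E. \<forall>e'\<in>E. e \<noteq> e' \<longrightarrow> path_image (\<gamma> e) \<inter> path_image (\<gamma> e') \<subseteq> pos ` (e \<inter> e'))"

definition outerplanar :: "'v set \<Rightarrow> 'v set set \<Rightarrow> bool" where
  "outerplanar V E \<longleftrightarrow>
     (\<exists>pos \<gamma>. plane_drawing V E pos \<gamma> \<and>
        (\<exists>x. x \<notin> drawing_set V E pos \<gamma> \<and>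
             \<not> bounded (connected_component_set (- drawing_set V E pos \<gamma>) x) \<and>
             (\<forall>v\<in>V. pos v \<in> closure (connected_component_set (- drawing_set V E pos \<gamma>) x))))"

definition maximal_outerplanar :: "'v set \<Rightarrow> 'v set set \<Rightarrow> bool" where
  "maximal_outerplanar V E \<longleftrightarrow> outerplanar V E \<and>
     (\<forall>u\<in>V. \<forall>v\<in>V. u \<noteq> v \<longrightarrow> {u, v} \<notin> E \<longrightarrow> \<not> outerplanar V (insert {u, v} E))"

text \<open>Labels: x1 = 0, x2 = 1, x3 = 2, y1 = 3, y2 = 4, y3 = 5.\<close>

definition S3_edges :: "nat set set" where
  "S3_edges = {{0,1},{0,2},{1,2},{0,3},{1,3},{1,4},{2,4},{2,5},{0,5}}"

definition S3_copy :: "'v set \<Rightarrow> 'v set set \<Rightarrow> (nat \<Rightarrow> 'v) \<Rightarrow> bool" where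
  "S3_copy V E f \<longleftrightarrow> inj_on f {0..<6} \<and> f ` {0..<6} \<subseteq> V \<and>
     (\<forall>i<6. \<forall>j<6. i \<noteq> j \<longrightarrow> ({f i, f j} \<in> E \<longleftrightarrow> {i, j} \<in> S3_edges))"

definition reduced_vertices :: "'v set \<Rightarrow> 'v set set \<Rightarrow> 'v set" where
  "reduced_vertices V E = {f i | f i. S3_copy V E f \<and> i < 3}"

definition reduced_edges :: "'v set \<Rightarrow> 'v set set \<Rightarrow> 'v set set" where
  "reduced_edges V E = {{f i, f j} | f i j. S3_copy V E f \<and> i < 3 \<and> j < 3 \<and> i \<noteq> j}"

type_synonym gpoint = "int \<times> int"

definition grid_adj :: "gpoint \<Rightarrow> gpoint \<Rightarrow> bool" where
  "grid_adj p q \<longleftrightarrow> \<bar>fst p - fst q\<bar> + \<bar>snd p - snd q\<bar> = 1"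

definition grid_path :: "gpoint list \<Rightarrow> bool" where
  "grid_path ps \<longleftrightarrow> ps \<noteq> [] \<and> distinct ps \<and>
     (\<forall>i. Suc i < length ps \<longrightarrow> grid_adj (ps ! i) (ps ! Suc i))"

definition path_edges :: "gpoint list \<Rightarrow> gpoint set set" where
  "path_edges ps = {{ps ! i, ps ! Suc i} | i. Suc i < length ps}"

definition bend_points :: "gpoint list \<Rightarrow> nat set" where
  "bend_points ps = {i. 0 < i \<and> Suc i < length ps \<and>
     ((snd (ps ! (i - 1)) = snd (ps ! i)) \<noteq> (snd (ps ! i) = snd (ps ! Suc i)))}"

definition bends :: "gpoint list \<Rightarrow> nat" where
  "bends ps = card (bend_points ps)"

definition EPG_rep :: "'v set \<Rightarrow> 'v set set \<Rightarrow> ('v \<Rightarrow> gpoint list) \<Rightarrow> bool" where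
  "EPG_rep V E P \<longleftrightarrow> (\<forall>v\<in>V. grid_path (P v)) \<and>
     (\<forall>u\<in>V. \<forall>v\<in>V. u \<noteq> v \<longrightarrow> ({u, v} \<in> E \<longleftrightarrow> path_edges (P u) \<inter> path_edges (P v) \<noteq> {}))"

definition B1_EPG_rep :: "'v set \<Rightarrow> 'v set set \<Rightarrow> ('v \<Rightarrow> gpoint list) \<Rightarrow> bool" where
  "B1_EPG_rep V E P \<longleftrightarrow> EPG_rep V E P \<and> (\<forall>v\<in>V. bends (P v) \<le> 1)"

definition is_claw :: "gpoint \<Rightarrow> gpoint \<Rightarrow> gpoint \<Rightarrow> gpoint \<Rightarrow> bool" where
  "is_claw c q1 q2 q3 \<longleftrightarrow> distinct [q1, q2, q3] \<and> grid_adj c q1 \<and> grid_adj c q2 \<and> grid_adj c q3"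

definition claw_edges :: "gpoint \<Rightarrow> gpoint \<Rightarrow> gpoint \<Rightarrow> gpoint \<Rightarrow> gpoint set set" where
  "claw_edges c q1 q2 q3 = {{c, q1}, {c, q2}, {c, q3}}"

text \<open>A path belongs to the claw clique of a claw iff it uses two of its three edges.\<close>

definition uses_two_claw_edges :: "gpoint list \<Rightarrow> gpoint \<Rightarrow> gpoint \<Rightarrow> gpoint \<Rightarrow> gpoint \<Rightarrow> bool" where
  "uses_two_claw_edges ps c q1 q2 q3 \<longleftrightarrow> card (path_edges ps \<inter> claw_edges c q1 q2 q3) = 2"

definition form_claw_clique :: "gpoint list set \<Rightarrow> bool" where
  "form_claw_clique Ps \<longleftrightarrow>
     (\<exists>c q1 q2 q3. is_claw c q1 q2 q3 \<and> (\<forall>ps\<in>Ps. uses_two_claw_edges ps c q1 q2 q3))"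

end

theory Submission
  imports Defs "HOL-Complex_Analysis.Winding_Numbers"
begin

text \<open>An outerplanar graph contains no \<open>K\<^sub>2\<^sub>,\<^sub>3\<close>: the three paths of length two between
  its two sides form a theta graph in the plane, one of them runs inside the cycle formed by the
  other two, and so its middle vertex is not on the outer face. Consequently, if each edge of a
  triangle of \<open>G\<close> is a central edge of a copy of \<open>S\<^sub>3\<close>, then the triangle itself is the
  centre of a copy of \<open>S\<^sub>3\<close>.

  In a \<open>B\<^sub>1\<close>-EPG representation every path is an elbow: a horizontal and a vertical segment
  sharing an end point. Three pairwise edge-intersecting elbows either overlap pairwise on one
  grid line, or each of them uses exactly two edges of a claw centred at the corner of one of
  them. For the centre of an induced \<open>S\<^sub>3\<close> the outer vertices rule out the first case.\<close>

section \<open>Outerplanar graphs are \<open>K\<^sub>2\<^sub>,\<^sub>3\<close>-free\<close>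

lemma connected_subset_inside:
  fixes K :: "'a::real_normed_vector set"
  assumes "closed K" "connected S" "S \<inter> K = {}" "S \<inter> inside K \<noteq> {}"
  shows "S \<subseteq> inside K"
proof -
  have S: "S \<subseteq> inside K \<union> outside K" using assms(3) inside_Un_outside by blast
  have "inside K \<inter> outside K \<inter> S = {}" by (auto simp: inside_outside)
  then have "inside K \<inter> S = {} \<or> outside K \<inter> S = {}"
    using connectedD[OF assms(2) open_inside[OF assms(1)] open_outside[OF assms(1)]] S by blast
  then show ?thesis using assms(4) S by blast
qed

lemma inside_Int_closure_unbounded_empty:
  fixes K :: "'a::euclidean_space set"
  assumes "closed K" "bounded K" "connected U" "\<not> bounded U" "U \<inter> K = {}"
  shows "inside K \<inter> closure U = {}"
proof -
  have "\<not> U \<subseteq> inside K" using assms(4) bounded_inside[OF assms(2)] bounded_subset by blast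
  then have "U \<inter> inside K = {}" using connected_subset_inside[OF assms(1,3,5)] by blast
  then show ?thesis using open_Int_closure_eq_empty[OF open_inside[OF assms(1)]] by blast
qed

lemma arc_interior_subset_inside:
  fixes g :: "real \<Rightarrow> 'a::euclidean_space"
  assumes "arc g" "closed K" "path_image g \<inter> K = {pathstart g, pathfinish g}"
    and "path_image g \<inter> inside K \<noteq> {}"
  shows "path_image g - {pathstart g, pathfinish g} \<subseteq> inside K"
proof (rule connected_subset_inside[OF assms(2)])
  show "connected (path_image g - {pathstart g, pathfinish g})"
    using connected_simple_path_endless arc_imp_simple_path assms(1) by blast
  show "(path_image g - {pathstart g, pathfinish g}) \<inter> K = {}" using assms(3) by blast
  have "pathstart g \<notin> inside K" "pathfinish g \<notin> inside K"
    using assms(3) inside_no_overlap by blast+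
  then show "(path_image g - {pathstart g, pathfinish g}) \<inter> inside K \<noteq> {}"
    using assms(4) by blast
qed

lemma arc_midpoint_interior:
  assumes "arc g"
  shows "g (1/2) \<in> path_image g - {pathstart g, pathfinish g}"
proof -
  have "inj_on g {0..1}" using assms arc_def by blast
  then have "g (1/2) \<noteq> g 0" "g (1/2) \<noteq> g 1" using inj_onD[of g "{0..1}" "1/2"] by force+
  then show ?thesis by (auto simp: path_image_def pathstart_def pathfinish_def)
qed

lemma arc_join_reversepath_loop:
  fixes g h :: "real \<Rightarrow> complex"
  assumes "arc g" "arc h" "pathstart h = pathstart g" "pathfinish h = pathfinish g"
    and "path_image g \<inter> path_image h = {pathstart g, pathfinish g}"
  shows "simple_path (g +++ reversepath h)"
    and "pathfinish (g +++ reversepath h) = pathstart (g +++ reversepath h)"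
    and "path_image (g +++ reversepath h) = path_image g \<union> path_image h"
    and "z \<notin> path_image g \<union> path_image h \<Longrightarrow>
      winding_number (g +++ reversepath h) z = winding_number g z - winding_number h z"
proof -
  show "simple_path (g +++ reversepath h)"
    using assms by (intro simple_path_join_loop) (auto simp: arc_reversepath)
  show "pathfinish (g +++ reversepath h) = pathstart (g +++ reversepath h)"
    using assms by simp
  show "path_image (g +++ reversepath h) = path_image g \<union> path_image h"
    using assms by (simp add: path_image_join)
  show "z \<notin> path_image g \<union> path_image h \<Longrightarrow>
      winding_number (g +++ reversepath h) z = winding_number g z - winding_number h z"
    using assms by (simp add: winding_number_join winding_number_reversepath arc_imp_path)
qed

text \<open>If not, the inside of the curve \<open>g\<^sub>1 \<union> g\<^sub>2\<close> avoids \<open>g\<^sub>3\<close>, so the winding numbers of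
  the curves \<open>g\<^sub>1 \<union> g\<^sub>3\<close> and \<open>g\<^sub>2 \<union> g\<^sub>3\<close> are constant there. Near the midpoints of
  \<open>g\<^sub>2\<close> and \<open>g\<^sub>1\<close> this region contains points outside these curves, so both winding numbers
  vanish on it, and hence so does their difference, the winding number of \<open>g\<^sub>1 \<union> g\<^sub>2\<close>.\<close>

lemma theta_arc_meets_inside:
  fixes g1 g2 g3 :: "real \<Rightarrow> complex"
  assumes arcs: "arc g1" "arc g2" "arc g3"
    and starts: "pathstart g2 = pathstart g1" "pathstart g3 = pathstart g1"
    and finishes: "pathfinish g2 = pathfinish g1" "pathfinish g3 = pathfinish g1"
    and meet: "path_image g1 \<inter> path_image g2 = {pathstart g1, pathfinish g1}"
      "path_image g1 \<inter> path_image g3 = {pathstart g1, pathfinish g1}"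
      "path_image g2 \<inter> path_image g3 = {pathstart g1, pathfinish g1}"
  shows "path_image g3 \<inter> inside (path_image g1 \<union> path_image g2) \<noteq> {} \<or>
         path_image g2 \<inter> inside (path_image g1 \<union> path_image g3) \<noteq> {} \<or>
         path_image g1 \<inter> inside (path_image g2 \<union> path_image g3) \<noteq> {}"
proof (rule ccontr)
  assume "\<not> ?thesis"
  then have n3: "path_image g3 \<inter> inside (path_image g1 \<union> path_image g2) = {}"
    and n2: "path_image g2 \<inter> inside (path_image g1 \<union> path_image g3) = {}"
    and n1: "path_image g1 \<inter> inside (path_image g2 \<union> path_image g3) = {}" by auto
  let ?K12 = "path_image g1 \<union> path_image g2"
  let ?K13 = "path_image g1 \<union> path_image g3"
  let ?K23 = "path_image g2 \<union> path_image g3"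
  note L12 = arc_join_reversepath_loop[OF arcs(1,2) starts(1) finishes(1) meet(1)]
  note L13 = arc_join_reversepath_loop[OF arcs(1,3) starts(2) finishes(2) meet(2)]
  note L23 = arc_join_reversepath_loop[OF arcs(2,3), unfolded starts finishes, OF refl refl meet(3)]
  have closed: "closed ?K13" "closed ?K23"
    using arcs by (auto intro!: closed_path_image arc_imp_path)
  note Jordan = Jordan_inside_outside[OF L12(1,2), unfolded L12(3)]
  have disj: "inside ?K12 \<inter> ?K13 = {}" "inside ?K12 \<inter> ?K23 = {}"
    using n3 inside_no_overlap by blast+
  have out2: "g2 (1/2) \<in> outside ?K13"
    using arc_midpoint_interior[OF arcs(2)] starts finishes meet n2
    by (auto simp: outside_inside)
  have out1: "g1 (1/2) \<in> outside ?K23"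
    using arc_midpoint_interior[OF arcs(1)] meet n1 by (auto simp: outside_inside)
  have "g2 (1/2) \<in> closure (inside ?K12)" "g1 (1/2) \<in> closure (inside ?K12)"
    using Jordan arc_midpoint_interior[OF arcs(1)] arc_midpoint_interior[OF arcs(2)]
    by (auto simp: frontier_def)
  then obtain z z' where z: "z \<in> inside ?K12" "z \<in> outside ?K13"
    and z': "z' \<in> inside ?K12" "z' \<in> outside ?K23"
    using open_Int_closure_eq_empty[OF open_outside[OF closed(1)], of "inside ?K12"]
      open_Int_closure_eq_empty[OF open_outside[OF closed(2)], of "inside ?K12"] out1 out2
    by blast
  have "winding_number (g1 +++ reversepath g3) z = winding_number (g1 +++ reversepath g3) z'"
    using winding_number_constant[OF simple_path_imp_path[OF L13(1)] L13(2), of "inside ?K12"]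
      Jordan disj(1) z z' L13(3) unfolding constant_on_def by (metis Int_commute)
  moreover have "winding_number (g2 +++ reversepath g3) z = winding_number (g2 +++ reversepath g3) z'"
    using winding_number_constant[OF simple_path_imp_path[OF L23(1)] L23(2), of "inside ?K12"]
      Jordan disj(2) z z' L23(3) unfolding constant_on_def by (metis Int_commute)
  moreover have "winding_number (g1 +++ reversepath g3) z = 0"
    using winding_number_zero_in_outside[OF simple_path_imp_path[OF L13(1)] L13(2)] z L13(3)
    by simp
  moreover have "winding_number (g2 +++ reversepath g3) z' = 0"
    using winding_number_zero_in_outside[OF simple_path_imp_path[OF L23(1)] L23(2)] z' L23(3)
    by simp
  moreover have "z \<notin> ?K12" "z \<notin> ?K13" "z \<notin> ?K23" "z' \<notin> ?K13" "z' \<notin> ?K23"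
    using z z' disj inside_no_overlap by blast+
  ultimately have "winding_number (g1 +++ reversepath g2) z = 0"
    using L12(4) L13(4) L23(4) by simp
  moreover have "winding_number (g1 +++ reversepath g2) z = 1 \<or> winding_number (g1 +++ reversepath g2) z = -1"
    using simple_closed_path_winding_number_inside[OF L12(1)] z L12(3) by metis
  ultimately show False by simp
qed

definition drawn_arc ::
    "('v set \<Rightarrow> real \<Rightarrow> complex) \<Rightarrow> ('v \<Rightarrow> complex) \<Rightarrow> 'v \<Rightarrow> 'v \<Rightarrow> real \<Rightarrow> complex" where
  "drawn_arc \<gamma> pos s t =
     (if pathstart (\<gamma> {s, t}) = pos s then \<gamma> {s, t} else reversepath (\<gamma> {s, t}))"

lemma drawn_arc:
  assumes "plane_drawing V E pos \<gamma>" "{s, t} \<in> E"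
  shows "arc (drawn_arc \<gamma> pos s t)" "pathstart (drawn_arc \<gamma> pos s t) = pos s"
    "pathfinish (drawn_arc \<gamma> pos s t) = pos t"
    "path_image (drawn_arc \<gamma> pos s t) = path_image (\<gamma> {s, t})"
proof -
  have arc: "arc (\<gamma> {s, t})" and ends: "{pathstart (\<gamma> {s, t}), pathfinish (\<gamma> {s, t})} = {pos s, pos t}"
    using assms unfolding plane_drawing_def by auto
  then have "pos s \<noteq> pos t" using arc_distinct_ends by (metis doubleton_eq_iff)
  then have "pathstart (\<gamma> {s, t}) = pos s \<and> pathfinish (\<gamma> {s, t}) = pos t \<or>
      pathstart (\<gamma> {s, t}) = pos t \<and> pathfinish (\<gamma> {s, t}) = pos s"
    using ends by (metis doubleton_eq_iff)
  then show "arc (drawn_arc \<gamma> pos s t)" "pathstart (drawn_arc \<gamma> pos s t) = pos s"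
    "pathfinish (drawn_arc \<gamma> pos s t) = pos t"
    "path_image (drawn_arc \<gamma> pos s t) = path_image (\<gamma> {s, t})"
    using arc \<open>pos s \<noteq> pos t\<close> by (auto simp: drawn_arc_def arc_reversepath)
qed

lemma drawn_arc_distinct_ends:
  assumes "plane_drawing V E pos \<gamma>" "{s, t} \<in> E"
  shows "s \<noteq> t"
  using drawn_arc[OF assms] arc_distinct_ends by metis

lemma drawn_edges_meet:
  assumes "plane_drawing V E pos \<gamma>" "e \<in> E" "e' \<in> E" "e \<noteq> e'"
  shows "path_image (\<gamma> e) \<inter> path_image (\<gamma> e') \<subseteq> pos ` (e \<inter> e')"
  using assms unfolding plane_drawing_def by blast

definition drawn_path_image :: "('v set \<Rightarrow> real \<Rightarrow> complex) \<Rightarrow> 'v \<Rightarrow> 'v \<Rightarrow> 'v \<Rightarrow> complex set" where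
  "drawn_path_image \<gamma> u w v = path_image (\<gamma> {u, w}) \<union> path_image (\<gamma> {w, v})"

lemma drawn_two_edge_arc:
  assumes drawing: "plane_drawing V E pos \<gamma>" and E: "{u, w} \<in> E" "{w, v} \<in> E" and "u \<noteq> v"
  defines "g \<equiv> drawn_arc \<gamma> pos u w +++ drawn_arc \<gamma> pos w v"
  shows "arc g" "pathstart g = pos u" "pathfinish g = pos v" "path_image g = drawn_path_image \<gamma> u w v"
proof -
  note uw = drawn_arc[OF drawing E(1)] and wv = drawn_arc[OF drawing E(2)]
  have "u \<noteq> w" using drawn_arc_distinct_ends[OF drawing E(1)] .
  then have "{u, w} \<noteq> {w, v}" "{u, w} \<inter> {w, v} = {w}"
    using \<open>u \<noteq> v\<close> by (auto simp: doubleton_eq_iff)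
  then have "path_image (\<gamma> {u, w}) \<inter> path_image (\<gamma> {w, v}) \<subseteq> {pos w}"
    using drawn_edges_meet[OF drawing E] by auto
  then show "arc g" unfolding g_def using uw wv by (intro arc_join) auto
  show "pathstart g = pos u" "pathfinish g = pos v" "path_image g = drawn_path_image \<gamma> u w v"
    unfolding g_def drawn_path_image_def using uw wv by (simp_all add: path_image_join)
qed

lemma drawn_two_edge_arcs_meet:
  assumes drawing: "plane_drawing V E pos \<gamma>"
    and E: "{u, w} \<in> E" "{w, v} \<in> E" "{u, w'} \<in> E" "{w', v} \<in> E" and "u \<noteq> v" "w \<noteq> w'"
  shows "drawn_path_image \<gamma> u w v \<inter> drawn_path_image \<gamma> u w' v = {pos u, pos v}"
proof -
  have "u \<noteq> w" "w \<noteq> v" "u \<noteq> w'" "w' \<noteq> v"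
    using drawn_arc_distinct_ends[OF drawing] E by blast+
  then have "{u, w} \<noteq> {u, w'}" "{u, w} \<noteq> {w', v}" "{w, v} \<noteq> {u, w'}" "{w, v} \<noteq> {w', v}"
    and "{u, w} \<inter> {u, w'} = {u}" "{u, w} \<inter> {w', v} = {}" "{w, v} \<inter> {u, w'} = {}"
      "{w, v} \<inter> {w', v} = {v}"
    using \<open>u \<noteq> v\<close> \<open>w \<noteq> w'\<close> by (auto simp: doubleton_eq_iff)
  then have "path_image (\<gamma> {u, w}) \<inter> path_image (\<gamma> {u, w'}) \<subseteq> {pos u}"
    "path_image (\<gamma> {u, w}) \<inter> path_image (\<gamma> {w', v}) = {}"
    "path_image (\<gamma> {w, v}) \<inter> path_image (\<gamma> {u, w'}) = {}"
    "path_image (\<gamma> {w, v}) \<inter> path_image (\<gamma> {w', v}) \<subseteq> {pos v}"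
    using drawn_edges_meet[OF drawing] E by (metis image_empty image_insert subset_empty)+
  moreover have "pos u \<in> path_image (\<gamma> {u, w})" "pos u \<in> path_image (\<gamma> {u, w'})"
    "pos v \<in> path_image (\<gamma> {w, v})" "pos v \<in> path_image (\<gamma> {w', v})"
    using drawn_arc[OF drawing] E by (metis pathstart_in_path_image pathfinish_in_path_image)+
  ultimately show ?thesis unfolding drawn_path_image_def by blast
qed

text \<open>The path through \<open>w\<^sub>3\<close> meets the other two only at its ends, so once it enters the
  inside of their union it stays there, middle vertex included.\<close>

lemma drawn_path_not_inside_drawn_cycle:
  assumes drawing: "plane_drawing V E pos \<gamma>"
    and U: "connected U" "\<not> bounded U" "U \<inter> drawing_set V E pos \<gamma> = {}" "pos w3 \<in> closure U"
    and V: "{u, v, w3} \<subseteq> V" and "u \<noteq> v" "w1 \<noteq> w3" "w2 \<noteq> w3"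
    and E: "\<forall>w\<in>{w1, w2, w3}. {u, w} \<in> E \<and> {w, v} \<in> E"
  shows "drawn_path_image \<gamma> u w3 v \<inter>
      inside (drawn_path_image \<gamma> u w1 v \<union> drawn_path_image \<gamma> u w2 v) = {}"
proof (rule ccontr)
  let ?K = "drawn_path_image \<gamma> u w1 v \<union> drawn_path_image \<gamma> u w2 v"
  assume enters: "drawn_path_image \<gamma> u w3 v \<inter> inside ?K \<noteq> {}"
  note arc = drawn_two_edge_arc[OF drawing _ _ \<open>u \<noteq> v\<close>]
  have K: "closed ?K" "bounded ?K"
    using arc(1,4) E by (metis insertCI closed_Un bounded_Un closed_path_image bounded_path_image arc_imp_path)+
  have "drawn_path_image \<gamma> u w3 v \<inter> ?K = {pos u, pos v}"
    using drawn_two_edge_arcs_meet[OF drawing _ _ _ _ \<open>u \<noteq> v\<close>] E \<open>w1 \<noteq> w3\<close> \<open>w2 \<noteq> w3\<close>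
    by (simp add: Int_Un_distrib)
  then have "drawn_path_image \<gamma> u w3 v - {pos u, pos v} \<subseteq> inside ?K"
    using arc_interior_subset_inside[OF arc(1) K(1)] arc(2-4) E enters by simp
  moreover have "pos w3 \<in> drawn_path_image \<gamma> u w3 v - {pos u, pos v}"
  proof -
    have "w3 \<noteq> u" "w3 \<noteq> v" using drawn_arc_distinct_ends[OF drawing] E by blast+
    then have "pos w3 \<noteq> pos u" "pos w3 \<noteq> pos v"
      using drawing V unfolding plane_drawing_def by (auto simp: inj_on_eq_iff)
    moreover have "pos w3 \<in> path_image (\<gamma> {u, w3})"
      using drawn_arc(3,4)[OF drawing] E by (metis insertCI pathfinish_in_path_image)
    ultimately show ?thesis unfolding drawn_path_image_def by blast
  qed
  moreover have "U \<inter> ?K = {}"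
    using U(3) E unfolding drawn_path_image_def drawing_set_def by blast
  then have "inside ?K \<inter> closure U = {}"
    using inside_Int_closure_unbounded_empty[OF K U(1,2)] by simp
  ultimately show False using U(4) by blast
qed

definition K23_free :: "'v set \<Rightarrow> 'v set set \<Rightarrow> bool" where
  "K23_free V E \<longleftrightarrow> (\<nexists>u v x y z. {u, v, x, y, z} \<subseteq> V \<and> u \<noteq> v \<and> distinct [x, y, z] \<and>
     (\<forall>w\<in>{x, y, z}. {u, w} \<in> E \<and> {w, v} \<in> E))"

lemma K23_freeD:
  assumes "K23_free V E" "{u, v, x, y, z} \<subseteq> V" "u \<noteq> v" "distinct [x, y, z]"
    "{u, x} \<in> E" "{x, v} \<in> E" "{u, y} \<in> E" "{y, v} \<in> E" "{u, z} \<in> E" "{z, v} \<in> E"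
  shows False
  using assms unfolding K23_free_def by blast

text \<open>The three drawn paths joining the two sides of a \<open>K\<^sub>2\<^sub>,\<^sub>3\<close> form a theta graph.\<close>

lemma outerplanar_imp_K23_free:
  assumes "outerplanar V E"
  shows "K23_free V E"
  unfolding K23_free_def
proof clarify
  fix u v x y z
  assume V: "{u, v, x, y, z} \<subseteq> V" and "u \<noteq> v" and "distinct [x, y, z]"
    and E: "\<forall>w\<in>{x, y, z}. {u, w} \<in> E \<and> {w, v} \<in> E"
  obtain pos \<gamma> x0 where drawing: "plane_drawing V E pos \<gamma>"
    and unbounded: "\<not> bounded (connected_component_set (- drawing_set V E pos \<gamma>) x0)"
    and outer: "\<forall>w\<in>V. pos w \<in> closure (connected_component_set (- drawing_set V E pos \<gamma>) x0)"
    using assms unfolding outerplanar_def by blast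
  have U: "connected (connected_component_set (- drawing_set V E pos \<gamma>) x0)"
    "connected_component_set (- drawing_set V E pos \<gamma>) x0 \<inter> drawing_set V E pos \<gamma> = {}"
    using connected_connected_component connected_component_subset by blast+
  have no_inside: "drawn_path_image \<gamma> u w3 v \<inter>
      inside (drawn_path_image \<gamma> u w1 v \<union> drawn_path_image \<gamma> u w2 v) = {}"
    if "w1 \<in> {x, y, z}" "w2 \<in> {x, y, z}" "w3 \<in> {x, y, z}" "w1 \<noteq> w3" "w2 \<noteq> w3" for w1 w2 w3
    using drawn_path_not_inside_drawn_cycle[OF drawing U(1) unbounded U(2)] outer V E that \<open>u \<noteq> v\<close>
    by (simp add: subset_iff) blast
  define g where "g w = drawn_arc \<gamma> pos u w +++ drawn_arc \<gamma> pos w v" for w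
  have arc: "arc (g w)" "pathstart (g w) = pos u" "pathfinish (g w) = pos v"
    "path_image (g w) = drawn_path_image \<gamma> u w v" if "w \<in> {x, y, z}" for w
    using drawn_two_edge_arc[OF drawing _ _ \<open>u \<noteq> v\<close>] E that unfolding g_def by auto
  have "drawn_path_image \<gamma> u w v \<inter> drawn_path_image \<gamma> u w' v = {pos u, pos v}"
    if "w \<in> {x, y, z}" "w' \<in> {x, y, z}" "w \<noteq> w'" for w w'
    using drawn_two_edge_arcs_meet[OF drawing _ _ _ _ \<open>u \<noteq> v\<close> \<open>w \<noteq> w'\<close>] E that by blast
  then have "path_image (g z) \<inter> inside (path_image (g x) \<union> path_image (g y)) \<noteq> {} \<or>
      path_image (g y) \<inter> inside (path_image (g x) \<union> path_image (g z)) \<noteq> {} \<or>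
      path_image (g x) \<inter> inside (path_image (g y) \<union> path_image (g z)) \<noteq> {}"
    using theta_arc_meets_inside[of "g x" "g y" "g z"] arc \<open>distinct [x, y, z]\<close>
    by (simp add: insert_commute)
  then show False using no_inside arc(4) \<open>distinct [x, y, z]\<close> by auto
qed

section \<open>Triangles of the reduced graph\<close>

text \<open>An induced \<open>S\<^sub>3\<close> with central triangle \<open>a b c\<close>, where \<open>p\<close>, \<open>q\<close>, \<open>s\<close> are
  the outer vertices attached to the central edges \<open>a b\<close>, \<open>b c\<close>, \<open>c a\<close>.\<close>

definition S3_config :: "'v set \<Rightarrow> 'v set set \<Rightarrow> 'v \<Rightarrow> 'v \<Rightarrow> 'v \<Rightarrow> 'v \<Rightarrow> 'v \<Rightarrow> 'v \<Rightarrow> bool" where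
  "S3_config V E a b c p q s \<longleftrightarrow> {a, b, c, p, q, s} \<subseteq> V \<and> distinct [a, b, c, p, q, s] \<and>
     {a, b} \<in> E \<and> {b, c} \<in> E \<and> {a, c} \<in> E \<and>
     {p, a} \<in> E \<and> {p, b} \<in> E \<and> {p, c} \<notin> E \<and>
     {q, b} \<in> E \<and> {q, c} \<in> E \<and> {q, a} \<notin> E \<and>
     {s, c} \<in> E \<and> {s, a} \<in> E \<and> {s, b} \<notin> E \<and>
     {p, q} \<notin> E \<and> {q, s} \<notin> E \<and> {p, s} \<notin> E"

lemma S3_config_rotate: "S3_config V E a b c p q s \<Longrightarrow> S3_config V E b c a q s p"
  unfolding S3_config_def by (auto simp: insert_commute)

lemma S3_config_swap: "S3_config V E a b c p q s \<Longrightarrow> S3_config V E b a c p s q"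
  unfolding S3_config_def by (auto simp: insert_commute)

lemma S3_copy_imp_S3_config:
  assumes "S3_copy V E f"
  shows "S3_config V E (f 0) (f 1) (f 2) (f 3) (f 4) (f 5)"
proof -
  have "inj_on f {0..<6}" and V: "f ` {0..<6} \<subseteq> V"
    and E: "\<And>i j. i < 6 \<Longrightarrow> j < 6 \<Longrightarrow> i \<noteq> j \<Longrightarrow> {f i, f j} \<in> E \<longleftrightarrow> {i, j} \<in> S3_edges"
    using assms unfolding S3_copy_def by auto
  then have "distinct (map f [0..<6])" by (simp add: distinct_map)
  moreover have "[0..<6] = [0, 1, 2, 3, 4, 5 :: nat]" by (simp add: upt_rec)
  ultimately have "distinct [f 0, f 1, f 2, f 3, f 4, f 5]" by simp
  moreover have "{f 0, f 1, f 2, f 3, f 4, f 5} \<subseteq> V" using V by (force simp: image_subset_iff)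
  ultimately show ?thesis unfolding S3_config_def by (simp add: E S3_edges_def doubleton_eq_iff)
qed

lemma reduced_edge_imp_S3_config:
  assumes "{a, b} \<in> reduced_edges V E"
  obtains c p q s where "S3_config V E a b c p q s"
proof -
  obtain f i j where f: "S3_copy V E f" and ij: "i < 3" "j < 3" "i \<noteq> j" and ab: "{a, b} = {f i, f j}"
    using assms unfolding reduced_edges_def by blast
  note S = S3_copy_imp_S3_config[OF f]
  have "\<exists>c p q s. S3_config V E (f i) (f j) c p q s"
  proof -
    have "i = 0 \<and> j = 1 \<or> i = 1 \<and> j = 0 \<or> i = 1 \<and> j = 2 \<or> i = 2 \<and> j = 1 \<or> i = 0 \<and> j = 2 \<or> i = 2 \<and> j = 0"
      using ij by auto
    then show ?thesis
      using S S3_config_swap[OF S] S3_config_rotate[OF S] S3_config_swap[OF S3_config_rotate[OF S]]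
        S3_config_rotate[OF S3_config_rotate[OF S]]
        S3_config_swap[OF S3_config_rotate[OF S3_config_rotate[OF S]]]
      by (elim disjE) auto
  qed
  then obtain c p q s where "S3_config V E (f i) (f j) c p q s" by blast
  moreover have "a = f i \<and> b = f j \<or> a = f j \<and> b = f i" using ab by (metis doubleton_eq_iff)
  ultimately show ?thesis using S3_config_swap that by metis
qed

lemma S3_config_common_neighbour:
  assumes "K23_free V E" "S3_config V E a b c p q s" "d \<in> V" "{a, d} \<in> E" "{b, d} \<in> E"
  shows "d = c \<or> d = p"
proof (rule ccontr)
  assume "\<not> (d = c \<or> d = p)"
  then show False
    using assms(2-5) K23_freeD[OF assms(1), of a b c d p]
    unfolding S3_config_def by (auto simp: insert_commute)
qed

lemma S3_configs_third_vertices_nonadjacent: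
  assumes "K23_free V E" "S3_config V E a b d c q s" "S3_config V E b c d' a q' s'" "d' \<noteq> a"
  shows "{d, d'} \<notin> E"
proof
  assume "{d, d'} \<in> E"
  moreover have "q \<noteq> d'" using assms(2,3) unfolding S3_config_def by (auto simp: insert_commute)
  ultimately show False
    using assms(2-4) K23_freeD[OF assms(1), of b d a q d']
    unfolding S3_config_def by (auto simp: insert_commute)
qed

text \<open>If the \<open>S\<^sub>3\<close> on \<open>a b\<close> has third central vertex \<open>d\<^sub>1 \<noteq> c\<close>, then
  \<open>K\<^sub>2\<^sub>,\<^sub>3\<close>-freeness forces \<open>c\<close> to be its outer vertex on \<open>a b\<close>; if this happens on all three
  edges, then \<open>d\<^sub>1\<close>, \<open>d\<^sub>2\<close>, \<open>d\<^sub>3\<close> are the outer vertices of an \<open>S\<^sub>3\<close> centred at \<open>a b c\<close>.\<close>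

lemma K23_free_triangle_S3_centre:
  assumes K: "K23_free V E"
    and S1: "S3_config V E a b d1 p1 q1 s1" and S2: "S3_config V E b c d2 p2 q2 s2"
    and S3: "S3_config V E c a d3 p3 q3 s3"
  obtains a' b' c' p q s where "S3_config V E a' b' c' p q s" "{a', b', c'} = {a, b, c}"
proof (cases "d1 = c \<or> d2 = a \<or> d3 = b")
  case True
  then show ?thesis using S1 S2 S3 that by (metis insert_commute)
next
  case False
  have V: "{a, b, c} \<subseteq> V" and E: "{a, b} \<in> E" "{b, c} \<in> E" "{c, a} \<in> E"
    using S1 S2 S3 unfolding S3_config_def by auto
  have "p1 = c" "p2 = a" "p3 = b"
    using S3_config_common_neighbour[OF K S1, of c] S3_config_common_neighbour[OF K S2, of a]
      S3_config_common_neighbour[OF K S3, of b] V E False by (auto simp: insert_commute)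
  note T1 = S1[unfolded \<open>p1 = c\<close>] and T2 = S2[unfolded \<open>p2 = a\<close>] and T3 = S3[unfolded \<open>p3 = b\<close>]
  have "{d1, d2} \<notin> E" "{d2, d3} \<notin> E" "{d3, d1} \<notin> E"
    using S3_configs_third_vertices_nonadjacent[OF K T1 T2] S3_configs_third_vertices_nonadjacent[OF K T2 T3]
      S3_configs_third_vertices_nonadjacent[OF K T3 T1] False by auto
  then have "S3_config V E a b c d1 d2 d3"
    using T1 T2 T3 False unfolding S3_config_def by (auto simp: insert_commute)
  then show ?thesis using that by blast
qed

section \<open>Grid paths with at most one bend\<close>

definition hsegment_edges :: "int \<Rightarrow> int \<Rightarrow> int \<Rightarrow> gpoint set set" where
  "hsegment_edges y x1 x2 = {{(x, y), (x + 1, y)} | x. x1 \<le> x \<and> x < x2}"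

definition vsegment_edges :: "int \<Rightarrow> int \<Rightarrow> int \<Rightarrow> gpoint set set" where
  "vsegment_edges x y1 y2 = {{(x, y), (x, y + 1)} | y. y1 \<le> y \<and> y < y2}"

definition ray_point :: "gpoint \<Rightarrow> int \<times> int \<Rightarrow> nat \<Rightarrow> gpoint" where
  "ray_point P d t = (fst P + int t * fst d, snd P + int t * snd d)"

definition ray_edges :: "gpoint \<Rightarrow> int \<times> int \<Rightarrow> nat \<Rightarrow> gpoint set set" where
  "ray_edges P d L = {{ray_point P d t, ray_point P d (Suc t)} | t. t < L}"

lemma ray_edges_horizontal:
  assumes "d = (1, 0) \<or> d = (-1, 0)"
  obtains x1 x2 where "ray_edges P d L = hsegment_edges (snd P) x1 x2" "x1 \<le> x2"
    "{x1, x2} = {fst P, fst (ray_point P d L)}"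
  using assms
proof
  assume d: "d = (1, 0)"
  have "ray_edges P d L = hsegment_edges (snd P) (fst P) (fst P + int L)"
  proof (intro set_eqI iffI)
    fix e assume "e \<in> hsegment_edges (snd P) (fst P) (fst P + int L)"
    then obtain x where "e = {(x, snd P), (x + 1, snd P)}" "fst P \<le> x" "x < fst P + int L"
      unfolding hsegment_edges_def by blast
    then show "e \<in> ray_edges P d L"
      unfolding ray_edges_def ray_point_def d
      by (auto intro!: exI[of _ "nat (x - fst P)"] simp: algebra_simps)
  qed (force simp: ray_edges_def hsegment_edges_def ray_point_def d)
  with that show ?thesis by (simp add: ray_point_def d)
next
  assume d: "d = (-1, 0)"
  have "ray_edges P d L = hsegment_edges (snd P) (fst P - int L) (fst P)"
  proof (intro set_eqI iffI)
    fix e assume "e \<in> ray_edges P d L"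
    then obtain t where "t < L" "e = {(fst P - int t - 1, snd P), (fst P - int t - 1 + 1, snd P)}"
      unfolding ray_edges_def ray_point_def d by (auto simp: algebra_simps insert_commute)
    then show "e \<in> hsegment_edges (snd P) (fst P - int L) (fst P)"
      unfolding hsegment_edges_def by force
  next
    fix e assume "e \<in> hsegment_edges (snd P) (fst P - int L) (fst P)"
    then obtain x where "e = {(x, snd P), (x + 1, snd P)}" "fst P - int L \<le> x" "x < fst P"
      unfolding hsegment_edges_def by blast
    then show "e \<in> ray_edges P d L"
      unfolding ray_edges_def ray_point_def d
      by (auto intro!: exI[of _ "nat (fst P - x - 1)"] simp: algebra_simps insert_commute)
  qed
  with that show ?thesis by (simp add: ray_point_def d insert_commute)
qed

lemma ray_edges_vertical:
  assumes "d = (0, 1) \<or> d = (0, -1)"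
  obtains y1 y2 where "ray_edges P d L = vsegment_edges (fst P) y1 y2" "y1 \<le> y2"
    "{y1, y2} = {snd P, snd (ray_point P d L)}"
  using assms
proof
  assume d: "d = (0, 1)"
  have "ray_edges P d L = vsegment_edges (fst P) (snd P) (snd P + int L)"
  proof (intro set_eqI iffI)
    fix e assume "e \<in> vsegment_edges (fst P) (snd P) (snd P + int L)"
    then obtain y where "e = {(fst P, y), (fst P, y + 1)}" "snd P \<le> y" "y < snd P + int L"
      unfolding vsegment_edges_def by blast
    then show "e \<in> ray_edges P d L"
      unfolding ray_edges_def ray_point_def d
      by (auto intro!: exI[of _ "nat (y - snd P)"] simp: algebra_simps)
  qed (force simp: ray_edges_def vsegment_edges_def ray_point_def d)
  with that show ?thesis by (simp add: ray_point_def d)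
next
  assume d: "d = (0, -1)"
  have "ray_edges P d L = vsegment_edges (fst P) (snd P - int L) (snd P)"
  proof (intro set_eqI iffI)
    fix e assume "e \<in> ray_edges P d L"
    then obtain t where "t < L" "e = {(fst P, snd P - int t - 1), (fst P, snd P - int t - 1 + 1)}"
      unfolding ray_edges_def ray_point_def d by (auto simp: algebra_simps insert_commute)
    then show "e \<in> vsegment_edges (fst P) (snd P - int L) (snd P)"
      unfolding vsegment_edges_def by force
  next
    fix e assume "e \<in> vsegment_edges (fst P) (snd P - int L) (snd P)"
    then obtain y where "e = {(fst P, y), (fst P, y + 1)}" "snd P - int L \<le> y" "y < snd P"
      unfolding vsegment_edges_def by blast
    then show "e \<in> ray_edges P d L"
      unfolding ray_edges_def ray_point_def d
      by (auto intro!: exI[of _ "nat (snd P - y - 1)"] simp: algebra_simps insert_commute)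
  qed
  with that show ?thesis by (simp add: ray_point_def d insert_commute)
qed

text \<open>An elbow \<open>(y, x1, x2, x, y1, y2)\<close> consists of the horizontal segment from \<open>(x1, y)\<close>
  to \<open>(x2, y)\<close> and the vertical segment from \<open>(x, y1)\<close> to \<open>(x, y2)\<close>; when both are
  nondegenerate, they meet in the common end point \<open>(x, y)\<close>.\<close>

type_synonym elbow = "int \<times> int \<times> int \<times> int \<times> int \<times> int"

fun elbow_edges :: "elbow \<Rightarrow> gpoint set set" where
  "elbow_edges (y, x1, x2, x, y1, y2) = hsegment_edges y x1 x2 \<union> vsegment_edges x y1 y2"

fun wf_elbow :: "elbow \<Rightarrow> bool" where
  "wf_elbow (y, x1, x2, x, y1, y2) \<longleftrightarrow> x1 \<le> x2 \<and> y1 \<le> y2 \<and>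
     (x1 < x2 \<and> y1 < y2 \<longrightarrow> (x = x1 \<or> x = x2) \<and> (y = y1 \<or> y = y2))"

definition grid_dirs :: "(int \<times> int) set" where
  "grid_dirs = {(1, 0), (-1, 0), (0, 1), (0, -1)}"

lemma hsegment_edges_empty [simp]: "hsegment_edges y x x = {}"
  unfolding hsegment_edges_def by auto

lemma vsegment_edges_empty [simp]: "vsegment_edges x y y = {}"
  unfolding vsegment_edges_def by auto

lemma ray_edges_elbow:
  assumes "d \<in> grid_dirs"
  obtains p where "wf_elbow p" "ray_edges P d L = elbow_edges p"
proof -
  consider "d = (1, 0) \<or> d = (-1, 0)" | "d = (0, 1) \<or> d = (0, -1)"
    using assms unfolding grid_dirs_def by blast
  then show ?thesis
  proof cases
    case 1
    then obtain x1 x2 where "ray_edges P d L = hsegment_edges (snd P) x1 x2" "x1 \<le> x2"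
      by (rule ray_edges_horizontal)
    then show ?thesis using that[of "(snd P, x1, x2, 0, 0, 0)"] by simp
  next
    case 2
    then obtain y1 y2 where "ray_edges P d L = vsegment_edges (fst P) y1 y2" "y1 \<le> y2"
      by (rule ray_edges_vertical)
    then show ?thesis using that[of "(0, 0, 0, fst P, y1, y2)"] by simp
  qed
qed

lemma perpendicular_rays_elbow:
  assumes "d \<in> grid_dirs" "d' \<in> grid_dirs" "(snd d = 0) \<noteq> (snd d' = 0)"
  obtains p where "wf_elbow p" "ray_edges P d L \<union> ray_edges (ray_point P d L) d' L' = elbow_edges p"
proof -
  define Q where "Q = ray_point P d L"
  have horizontal_vertical: "\<exists>p. wf_elbow p \<and> ray_edges A h M \<union> ray_edges B v N = elbow_edges p"
    if hv: "h = (1, 0) \<or> h = (-1, 0)" "v = (0, 1) \<or> v = (0, -1)"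
      "Q = ray_point A h M \<and> Q = B \<or> Q = A \<and> Q = ray_point B v N" for A B h v M N
  proof -
    obtain x1 x2 where X: "ray_edges A h M = hsegment_edges (snd A) x1 x2" "x1 \<le> x2"
      "{x1, x2} = {fst A, fst (ray_point A h M)}"
      using hv(1) by (rule ray_edges_horizontal)
    obtain y1 y2 where Y: "ray_edges B v N = vsegment_edges (fst B) y1 y2" "y1 \<le> y2"
      "{y1, y2} = {snd B, snd (ray_point B v N)}"
      using hv(2) by (rule ray_edges_vertical)
    have "snd (ray_point A h M) = snd A" "fst (ray_point B v N) = fst B"
      using hv(1,2) by (auto simp: ray_point_def)
    then have "wf_elbow (snd Q, x1, x2, fst Q, y1, y2)" "snd Q = snd A" "fst Q = fst B"
      using X(2,3) Y(2,3) hv(3) by (auto simp: doubleton_eq_iff)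
    then show ?thesis using X(1) Y(1) by (metis elbow_edges.simps)
  qed
  have "\<exists>p. wf_elbow p \<and> ray_edges P d L \<union> ray_edges Q d' L' = elbow_edges p"
  proof (cases "snd d = 0")
    case True
    then have "d = (1, 0) \<or> d = (-1, 0)" "d' = (0, 1) \<or> d' = (0, -1)"
      using assms unfolding grid_dirs_def by auto
    then show ?thesis
      using horizontal_vertical[where A = P and h = d and M = L and B = Q and v = d' and N = L']
      unfolding Q_def by blast
  next
    case False
    then have "d' = (1, 0) \<or> d' = (-1, 0)" "d = (0, 1) \<or> d = (0, -1)"
      using assms unfolding grid_dirs_def by auto
    then show ?thesis
      using horizontal_vertical[where A = Q and h = d' and M = L' and B = P and v = d and N = L]
      unfolding Q_def by (simp add: Un_commute)
  qed
  then show ?thesis using that unfolding Q_def by blast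
qed

definition step_dir :: "gpoint list \<Rightarrow> nat \<Rightarrow> int \<times> int" where
  "step_dir ps i = (fst (ps ! Suc i) - fst (ps ! i), snd (ps ! Suc i) - snd (ps ! i))"

lemma grid_path_step_dir:
  assumes "grid_path ps" "Suc i < length ps"
  shows "step_dir ps i \<in> grid_dirs"
proof -
  have "grid_adj (ps ! i) (ps ! Suc i)" using assms unfolding grid_path_def by blast
  then show ?thesis unfolding grid_adj_def step_dir_def grid_dirs_def by (auto simp: abs_if split: if_splits)
qed

lemma nth_Suc_step_dir: "ps ! Suc i = (fst (ps ! i) + fst (step_dir ps i), snd (ps ! i) + snd (step_dir ps i))"
  unfolding step_dir_def by simp

lemma bend_points_step_dir:
  "i \<in> bend_points ps \<longleftrightarrow>
     0 < i \<and> Suc i < length ps \<and> (snd (step_dir ps (i - 1)) = 0) \<noteq> (snd (step_dir ps i) = 0)"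
proof -
  have "snd (step_dir ps j) = 0 \<longleftrightarrow> snd (ps ! j) = snd (ps ! Suc j)" for j
    by (auto simp: step_dir_def)
  then show ?thesis by (cases i) (simp_all add: bend_points_def)
qed

text \<open>Without a bend the direction cannot reverse either, since grid paths do not revisit points.\<close>

lemma grid_path_step_dir_Suc:
  assumes gp: "grid_path ps" and "Suc (Suc i) < length ps" "Suc i \<notin> bend_points ps"
  shows "step_dir ps (Suc i) = step_dir ps i"
proof (rule ccontr)
  assume "step_dir ps (Suc i) \<noteq> step_dir ps i"
  moreover have "step_dir ps i \<in> grid_dirs" "step_dir ps (Suc i) \<in> grid_dirs"
    using grid_path_step_dir[OF gp] assms(2) by auto
  ultimately have "step_dir ps (Suc i) = (- fst (step_dir ps i), - snd (step_dir ps i))"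
    using assms(2,3) unfolding bend_points_step_dir grid_dirs_def by auto
  then have "ps ! Suc (Suc i) = ps ! i"
    using nth_Suc_step_dir[of ps "Suc i"] nth_Suc_step_dir[of ps i] by (simp add: prod_eq_iff)
  moreover have "distinct ps" using gp grid_path_def by blast
  ultimately show False using assms(2) nth_eq_iff_index_eq[of ps "Suc (Suc i)" i] by simp
qed

lemma straight_run_step_dir:
  assumes gp: "grid_path ps" and "j < length ps" and straight: "\<forall>i. m < i \<longrightarrow> i < j \<longrightarrow> i \<notin> bend_points ps"
  shows "m \<le> i \<Longrightarrow> i < j \<Longrightarrow> step_dir ps i = step_dir ps m"
proof (induction i)
  case (Suc i)
  then show ?case
    using grid_path_step_dir_Suc[OF gp, of i] assms(2) straight by (cases "m = Suc i") auto
qed simp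

lemma straight_run_nth:
  assumes gp: "grid_path ps" and "j < length ps" and straight: "\<forall>i. m < i \<longrightarrow> i < j \<longrightarrow> i \<notin> bend_points ps"
  shows "m + t \<le> j \<Longrightarrow> ps ! (m + t) = ray_point (ps ! m) (step_dir ps m) t"
proof (induction t)
  case (Suc t)
  then show ?case
    using nth_Suc_step_dir[of ps "m + t"] straight_run_step_dir[OF assms, of "m + t"]
    by (simp add: ray_point_def algebra_simps)
qed (simp add: ray_point_def)

lemma straight_run_edges:
  assumes gp: "grid_path ps" and "j < length ps" and straight: "\<forall>i. m < i \<longrightarrow> i < j \<longrightarrow> i \<notin> bend_points ps"
    and "m \<le> j"
  shows "(\<lambda>i. {ps ! i, ps ! Suc i}) ` {m..<j} = ray_edges (ps ! m) (step_dir ps m) (j - m)"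
proof -
  have "(\<lambda>i. {ps ! i, ps ! Suc i}) ` {m..<j} = (\<lambda>i. {ps ! i, ps ! Suc i}) ` (\<lambda>t. m + t) ` {..<j - m}"
    using \<open>m \<le> j\<close> by (simp add: image_add_atLeastLessThan lessThan_atLeast0)
  also have "\<dots> = ray_edges (ps ! m) (step_dir ps m) (j - m)"
    unfolding ray_edges_def image_image using straight_run_nth[OF assms(1-3)]
    by (auto simp flip: add_Suc_right)
  finally show ?thesis .
qed

lemma path_edges_image: "path_edges ps = (\<lambda>i. {ps ! i, ps ! Suc i}) ` {0..<length ps - 1}"
  unfolding path_edges_def by (auto simp: less_diff_conv)

lemma grid_path_no_bend_elbow:
  assumes gp: "grid_path ps" and "bend_points ps = {}"
  obtains p where "wf_elbow p" "path_edges ps = elbow_edges p"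
proof (cases "length ps = 1")
  case True
  then show ?thesis using that[of "(0, 0, 0, 0, 0, 0)"] by (simp add: path_edges_image)
next
  case False
  then have "Suc 0 < length ps" using gp unfolding grid_path_def by (cases ps) auto
  then have "step_dir ps 0 \<in> grid_dirs" using grid_path_step_dir[OF gp] by simp
  then obtain p where "wf_elbow p" "ray_edges (ps ! 0) (step_dir ps 0) (length ps - 1) = elbow_edges p"
    by (rule ray_edges_elbow)
  moreover have "path_edges ps = ray_edges (ps ! 0) (step_dir ps 0) (length ps - 1)"
    using straight_run_edges[OF gp, of "length ps - 1" 0] assms(2) \<open>Suc 0 < length ps\<close>
    by (simp add: path_edges_image)
  ultimately show ?thesis using that by simp
qed

lemma grid_path_single_bend_elbow:
  assumes gp: "grid_path ps" and "bend_points ps = {k}"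
  obtains p where "wf_elbow p" "path_edges ps = elbow_edges p"
proof -
  define n where "n = length ps"
  have "k \<in> bend_points ps" using assms(2) by simp
  then have k: "0 < k" "Suc k < n" "(snd (step_dir ps (k - 1)) = 0) \<noteq> (snd (step_dir ps k) = 0)"
    unfolding bend_points_step_dir n_def by blast+
  have straight: "\<forall>i. 0 < i \<longrightarrow> i < k \<longrightarrow> i \<notin> bend_points ps"
    "\<forall>i. k < i \<longrightarrow> i < n - 1 \<longrightarrow> i \<notin> bend_points ps"
    using assms(2) by auto
  have "{0..<n - 1} = {0..<k} \<union> {k..<n - 1}" using k by auto
  then have split: "path_edges ps =
      ray_edges (ps ! 0) (step_dir ps 0) k \<union> ray_edges (ps ! k) (step_dir ps k) (n - 1 - k)"
    using straight_run_edges[OF gp _ straight(1)] straight_run_edges[OF gp _ straight(2)] k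
    unfolding path_edges_image n_def by (simp add: image_Un)
  have corner: "ps ! k = ray_point (ps ! 0) (step_dir ps 0) k"
    using straight_run_nth[OF gp _ straight(1), of k] k n_def by simp
  obtain p where "wf_elbow p"
    "ray_edges (ps ! 0) (step_dir ps 0) k \<union>
       ray_edges (ray_point (ps ! 0) (step_dir ps 0) k) (step_dir ps k) (n - 1 - k) = elbow_edges p"
  proof (rule perpendicular_rays_elbow)
    show "step_dir ps 0 \<in> grid_dirs" "step_dir ps k \<in> grid_dirs"
      using grid_path_step_dir[OF gp] k n_def by auto
    have "step_dir ps (k - 1) = step_dir ps 0"
      using straight_run_step_dir[OF gp _ straight(1), of "k - 1"] k n_def by simp
    then show "(snd (step_dir ps 0) = 0) \<noteq> (snd (step_dir ps k) = 0)" using k(3) by simp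
  qed
  then show ?thesis using that split corner by metis
qed

lemma grid_path_at_most_one_bend_elbow:
  assumes "grid_path ps" "bends ps \<le> 1"
  obtains p where "wf_elbow p" "path_edges ps = elbow_edges p"
proof -
  have "finite (bend_points ps)"
    unfolding bend_points_def by (rule finite_subset[of _ "{..<length ps}"]) auto
  then consider "bend_points ps = {}" | k where "bend_points ps = {k}"
    using assms(2) unfolding bends_def by (metis card_0_eq card_1_singletonE le_Suc_eq le_zero_eq One_nat_def)
  then show ?thesis
  proof cases
    case 1
    show ?thesis using grid_path_no_bend_elbow[OF assms(1) 1] that .
  next
    case (2 k)
    show ?thesis using grid_path_single_bend_elbow[OF assms(1) 2] that .
  qed
qed

section \<open>Intersecting elbows\<close>

lemma hedge_eq_iff: "{(x, y), (x + 1, y)} = {(x', y'), (x' + 1, y')} \<longleftrightarrow> x = x' \<and> y = y'"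
  for x y x' y' :: int
  by (auto simp: doubleton_eq_iff)

lemma vedge_eq_iff: "{(x, y), (x, y + 1)} = {(x', y'), (x', y' + 1)} \<longleftrightarrow> x = x' \<and> y = y'"
  for x y x' y' :: int
  by (auto simp: doubleton_eq_iff)

lemma hedge_neq_vedge: "{(x, y), (x + 1, y)} \<noteq> {(x', y'), (x', y' + 1)}"
  for x y x' y' :: int
  by (auto simp: doubleton_eq_iff)

lemma hsegment_edges_Int_vsegment_edges: "hsegment_edges y x1 x2 \<inter> vsegment_edges x y1 y2 = {}"
  unfolding hsegment_edges_def vsegment_edges_def using hedge_neq_vedge by blast

lemma hsegment_edges_Int_nonempty_iff:
  "hsegment_edges y x1 x2 \<inter> hsegment_edges y' x1' x2' \<noteq> {} \<longleftrightarrow>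
     y = y' \<and> x1 < x2 \<and> x1 < x2' \<and> x1' < x2 \<and> x1' < x2'"
proof
  assume "hsegment_edges y x1 x2 \<inter> hsegment_edges y' x1' x2' \<noteq> {}"
  then obtain x x' where "{(x, y), (x + 1, y)} = {(x', y'), (x' + 1, y')}"
    "x1 \<le> x" "x < x2" "x1' \<le> x'" "x' < x2'"
    unfolding hsegment_edges_def by blast
  then show "y = y' \<and> x1 < x2 \<and> x1 < x2' \<and> x1' < x2 \<and> x1' < x2'" unfolding hedge_eq_iff by auto
next
  assume "y = y' \<and> x1 < x2 \<and> x1 < x2' \<and> x1' < x2 \<and> x1' < x2'"
  then have "{(max x1 x1', y), (max x1 x1' + 1, y)} \<in> hsegment_edges y x1 x2 \<inter> hsegment_edges y' x1' x2'"
    unfolding hsegment_edges_def by auto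
  then show "hsegment_edges y x1 x2 \<inter> hsegment_edges y' x1' x2' \<noteq> {}" by blast
qed

lemma vsegment_edges_Int_nonempty_iff:
  "vsegment_edges x y1 y2 \<inter> vsegment_edges x' y1' y2' \<noteq> {} \<longleftrightarrow>
     x = x' \<and> y1 < y2 \<and> y1 < y2' \<and> y1' < y2 \<and> y1' < y2'"
proof
  assume "vsegment_edges x y1 y2 \<inter> vsegment_edges x' y1' y2' \<noteq> {}"
  then obtain y y' where "{(x, y), (x, y + 1)} = {(x', y'), (x', y' + 1)}"
    "y1 \<le> y" "y < y2" "y1' \<le> y'" "y' < y2'"
    unfolding vsegment_edges_def by blast
  then show "x = x' \<and> y1 < y2 \<and> y1 < y2' \<and> y1' < y2 \<and> y1' < y2'" unfolding vedge_eq_iff by auto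
next
  assume "x = x' \<and> y1 < y2 \<and> y1 < y2' \<and> y1' < y2 \<and> y1' < y2'"
  then have "{(x, max y1 y1'), (x, max y1 y1' + 1)} \<in> vsegment_edges x y1 y2 \<inter> vsegment_edges x' y1' y2'"
    unfolding vsegment_edges_def by auto
  then show "vsegment_edges x y1 y2 \<inter> vsegment_edges x' y1' y2' \<noteq> {}" by blast
qed

fun elbows_share :: "elbow \<Rightarrow> elbow \<Rightarrow> bool" where
  "elbows_share (y, x1, x2, x, y1, y2) (y', x1', x2', x', y1', y2') \<longleftrightarrow>
     (y = y' \<and> x1 < x2 \<and> x1 < x2' \<and> x1' < x2 \<and> x1' < x2') \<or>
     (x = x' \<and> y1 < y2 \<and> y1 < y2' \<and> y1' < y2 \<and> y1' < y2')"

lemma elbow_edges_Int_nonempty_iff: "elbow_edges p \<inter> elbow_edges q \<noteq> {} \<longleftrightarrow> elbows_share p q"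
proof -
  obtain y x1 x2 x y1 y2 where p: "p = (y, x1, x2, x, y1, y2)" by (cases p) auto
  obtain y' x1' x2' x' y1' y2' where q: "q = (y', x1', x2', x', y1', y2')" by (cases q) auto
  have "elbow_edges p \<inter> elbow_edges q =
      (hsegment_edges y x1 x2 \<inter> hsegment_edges y' x1' x2') \<union> (vsegment_edges x y1 y2 \<inter> vsegment_edges x' y1' y2')"
    using hsegment_edges_Int_vsegment_edges[of y x1 x2 x' y1' y2']
      hsegment_edges_Int_vsegment_edges[of y' x1' x2' x y1 y2]
    unfolding p q by auto
  then show ?thesis
    unfolding p q using hsegment_edges_Int_nonempty_iff vsegment_edges_Int_nonempty_iff by auto
qed

datatype arm = East | West | North | South

fun arm_end :: "gpoint \<Rightarrow> arm \<Rightarrow> gpoint" where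
  "arm_end (x, y) East = (x + 1, y)"
| "arm_end (x, y) West = (x - 1, y)"
| "arm_end (x, y) North = (x, y + 1)"
| "arm_end (x, y) South = (x, y - 1)"

fun elbow_uses_arm :: "elbow \<Rightarrow> gpoint \<Rightarrow> arm \<Rightarrow> bool" where
  "elbow_uses_arm (y', x1, x2, x', y1, y2) (x, y) East \<longleftrightarrow> y = y' \<and> x1 \<le> x \<and> x < x2"
| "elbow_uses_arm (y', x1, x2, x', y1, y2) (x, y) West \<longleftrightarrow> y = y' \<and> x1 < x \<and> x \<le> x2"
| "elbow_uses_arm (y', x1, x2, x', y1, y2) (x, y) North \<longleftrightarrow> x = x' \<and> y1 \<le> y \<and> y < y2"
| "elbow_uses_arm (y', x1, x2, x', y1, y2) (x, y) South \<longleftrightarrow> x = x' \<and> y1 < y \<and> y \<le> y2"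

lemma hedge_in_elbow_edges_iff:
  "{(x, y), (x + 1, y)} \<in> elbow_edges p \<longleftrightarrow> elbow_uses_arm p (x, y) East"
proof -
  obtain y' x1 x2 x' y1 y2 where p: "p = (y', x1, x2, x', y1, y2)" by (cases p) auto
  show ?thesis
    unfolding p by (auto simp: hsegment_edges_def vsegment_edges_def hedge_eq_iff hedge_neq_vedge)
qed

lemma vedge_in_elbow_edges_iff:
  "{(x, y), (x, y + 1)} \<in> elbow_edges p \<longleftrightarrow> elbow_uses_arm p (x, y) North"
proof -
  obtain y' x1 x2 x' y1 y2 where p: "p = (y', x1, x2, x', y1, y2)" by (cases p) auto
  show ?thesis
    unfolding p by (auto simp: hsegment_edges_def vsegment_edges_def vedge_eq_iff hedge_neq_vedge[symmetric])
qed

lemma elbow_uses_arm_iff: "elbow_uses_arm p c a \<longleftrightarrow> {c, arm_end c a} \<in> elbow_edges p"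
proof -
  obtain y' x1 x2 x' y1 y2 where p: "p = (y', x1, x2, x', y1, y2)" by (cases p) auto
  obtain x y where c: "c = (x, y)" by fastforce
  have "{(x, y), (x - 1, y)} = {(x - 1, y), (x - 1 + 1, y)}"
    and "{(x, y), (x, y - 1)} = {(x, y - 1), (x, y - 1 + 1)}" by auto
  then have "{(x, y), (x - 1, y)} \<in> elbow_edges p \<longleftrightarrow> elbow_uses_arm p (x - 1, y) East"
    and "{(x, y), (x, y - 1)} \<in> elbow_edges p \<longleftrightarrow> elbow_uses_arm p (x, y - 1) North"
    using hedge_in_elbow_edges_iff[of "x - 1" y p] vedge_in_elbow_edges_iff[of x "y - 1" p]
    by (simp_all only:)
  moreover have "elbow_uses_arm p (x, y) West \<longleftrightarrow> elbow_uses_arm p (x - 1, y) East"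
    and "elbow_uses_arm p (x, y) South \<longleftrightarrow> elbow_uses_arm p (x, y - 1) North"
    by (auto simp: p)
  ultimately show ?thesis
    using hedge_in_elbow_edges_iff[of x y p] vedge_in_elbow_edges_iff[of x y p]
    unfolding c by (cases a) (simp_all only: arm_end.simps)
qed

fun elbow_corner :: "elbow \<Rightarrow> gpoint" where
  "elbow_corner (y, x1, x2, x, y1, y2) = (x, y)"

definition exactly_two :: "bool \<Rightarrow> bool \<Rightarrow> bool \<Rightarrow> bool" where
  "exactly_two A B C \<longleftrightarrow> (A \<and> B \<and> \<not> C) \<or> (A \<and> \<not> B \<and> C) \<or> (\<not> A \<and> B \<and> C)"

fun elbow_claw :: "elbow \<Rightarrow> gpoint \<Rightarrow> arm \<Rightarrow> bool" where
  "elbow_claw p c East =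
     exactly_two (elbow_uses_arm p c West) (elbow_uses_arm p c North) (elbow_uses_arm p c South)"
| "elbow_claw p c West =
     exactly_two (elbow_uses_arm p c East) (elbow_uses_arm p c North) (elbow_uses_arm p c South)"
| "elbow_claw p c North =
     exactly_two (elbow_uses_arm p c East) (elbow_uses_arm p c West) (elbow_uses_arm p c South)"
| "elbow_claw p c South =
     exactly_two (elbow_uses_arm p c East) (elbow_uses_arm p c West) (elbow_uses_arm p c North)"

definition claw_at :: "elbow set \<Rightarrow> gpoint \<Rightarrow> bool" where
  "claw_at Ps c \<longleftrightarrow> (\<exists>a\<in>{East, West, North, South}. \<forall>p\<in>Ps. elbow_claw p c a)"

fun row_overlap :: "elbow \<Rightarrow> elbow \<Rightarrow> elbow \<Rightarrow> bool" where
  "row_overlap (ya, xa1, xa2, _) (yb, xb1, xb2, _) (yc, xc1, xc2, _) \<longleftrightarrow>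
     ya = yb \<and> yb = yc \<and> xa1 < xa2 \<and> xb1 < xb2 \<and> xc1 < xc2 \<and>
     xa1 < xb2 \<and> xb1 < xa2 \<and> xa1 < xc2 \<and> xc1 < xa2 \<and> xb1 < xc2 \<and> xc1 < xb2"

fun column_overlap :: "elbow \<Rightarrow> elbow \<Rightarrow> elbow \<Rightarrow> bool" where
  "column_overlap (_, _, _, xa, ya1, ya2) (_, _, _, xb, yb1, yb2) (_, _, _, xc, yc1, yc2) \<longleftrightarrow>
     xa = xb \<and> xb = xc \<and> ya1 < ya2 \<and> yb1 < yb2 \<and> yc1 < yc2 \<and>
     ya1 < yb2 \<and> yb1 < ya2 \<and> ya1 < yc2 \<and> yc1 < ya2 \<and> yb1 < yc2 \<and> yc1 < yb2"

lemma pairwise_sharing_elbows_cases: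
  assumes "wf_elbow pa" "wf_elbow pb" "wf_elbow pc"
    and "elbows_share pa pb" "elbows_share pb pc" "elbows_share pa pc"
  shows "row_overlap pa pb pc \<or> column_overlap pa pb pc \<or> claw_at {pa, pb, pc} (elbow_corner pa) \<or>
    claw_at {pa, pb, pc} (elbow_corner pb) \<or> claw_at {pa, pb, pc} (elbow_corner pc)"
proof -
  obtain ya xa1 xa2 xa ya1 ya2 where a: "pa = (ya, xa1, xa2, xa, ya1, ya2)" by (cases pa) auto
  obtain yb xb1 xb2 xb yb1 yb2 where b: "pb = (yb, xb1, xb2, xb, yb1, yb2)" by (cases pb) auto
  obtain yc xc1 xc2 xc yc1 yc2 where c: "pc = (yc, xc1, xc2, xc, yc1, yc2)" by (cases pc) auto
  show ?thesis
    using assms unfolding a b c claw_at_def bex_simps ball_simps elbow_claw.simps elbow_corner.simps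
      elbow_uses_arm.simps exactly_two_def wf_elbow.simps elbows_share.simps row_overlap.simps
      column_overlap.simps
    by (smt (z3))
qed

lemma S3_elbows_no_overlap:
  fixes el :: "'v \<Rightarrow> elbow"
  assumes S: "S3_config V E a b c p q s"
    and wf: "\<forall>v\<in>V. wf_elbow (el v)"
    and share: "\<forall>u\<in>V. \<forall>v\<in>V. u \<noteq> v \<longrightarrow> ({u, v} \<in> E \<longleftrightarrow> elbows_share (el u) (el v))"
  shows "\<not> row_overlap (el a) (el b) (el c) \<and> \<not> column_overlap (el a) (el b) (el c)"
proof -
  have V: "{a, b, c, p, q, s} \<subseteq> V" and distinct: "distinct [p, q, s, a, b, c]"
    using S unfolding S3_config_def by auto
  then have share': "{u, v} \<in> E \<longleftrightarrow> elbows_share (el u) (el v)"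
    if "u \<in> {a, b, c, p, q, s}" "v \<in> {a, b, c, p, q, s}" "u \<noteq> v" for u v
    using share that by blast
  have "wf_elbow (el a)" "wf_elbow (el b)" "wf_elbow (el c)" "wf_elbow (el p)" "wf_elbow (el q)" "wf_elbow (el s)"
    using V wf by auto
  moreover have "elbows_share (el p) (el a)" "elbows_share (el p) (el b)" "\<not> elbows_share (el p) (el c)"
    "elbows_share (el q) (el b)" "elbows_share (el q) (el c)" "\<not> elbows_share (el q) (el a)"
    "elbows_share (el s) (el c)" "elbows_share (el s) (el a)" "\<not> elbows_share (el s) (el b)"
    "\<not> elbows_share (el p) (el q)" "\<not> elbows_share (el q) (el s)" "\<not> elbows_share (el p) (el s)"
    using S distinct unfolding S3_config_def by (simp_all add: share'[symmetric])
  moreover obtain ya xa1 xa2 xa ya1 ya2 where "el a = (ya, xa1, xa2, xa, ya1, ya2)" by (cases "el a") auto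
  moreover obtain yb xb1 xb2 xb yb1 yb2 where "el b = (yb, xb1, xb2, xb, yb1, yb2)" by (cases "el b") auto
  moreover obtain yc xc1 xc2 xc yc1 yc2 where "el c = (yc, xc1, xc2, xc, yc1, yc2)" by (cases "el c") auto
  moreover obtain yp xp1 xp2 xp yp1 yp2 where "el p = (yp, xp1, xp2, xp, yp1, yp2)" by (cases "el p") auto
  moreover obtain yq xq1 xq2 xq yq1 yq2 where "el q = (yq, xq1, xq2, xq, yq1, yq2)" by (cases "el q") auto
  moreover obtain ys xs1 xs2 xs ys1 ys2 where "el s = (ys, xs1, xs2, xs, ys1, ys2)" by (cases "el s") auto
  ultimately show ?thesis
    by (simp only: wf_elbow.simps elbows_share.simps row_overlap.simps column_overlap.simps) (smt (z3))
qed

section \<open>Claw cliques\<close>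

lemma grid_adj_arm_end: "grid_adj c (arm_end c a)"
  by (cases c; cases a) (simp_all add: grid_adj_def)

lemma arm_end_eq_iff: "arm_end c a = arm_end c a' \<longleftrightarrow> a = a'"
  by (cases c; cases a; cases a') simp_all

lemma arm_end_neq: "arm_end c a \<noteq> c"
  by (cases c; cases a) simp_all

lemma card_Int_three_eq_two:
  assumes "distinct [e1, e2, e3]" "exactly_two (e1 \<in> S) (e2 \<in> S) (e3 \<in> S)"
  shows "card (S \<inter> {e1, e2, e3}) = 2"
proof -
  from assms(2) consider "S \<inter> {e1, e2, e3} = {e1, e2}" | "S \<inter> {e1, e2, e3} = {e1, e3}" | "S \<inter> {e1, e2, e3} = {e2, e3}"
    unfolding exactly_two_def by blast
  then show ?thesis using assms(1) by cases auto
qed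

lemma claw_at_imp_form_claw_clique:
  assumes "claw_at Ps c" and "\<forall>A\<in>As. \<exists>p\<in>Ps. path_edges A = elbow_edges p"
  shows "form_claw_clique As"
proof -
  obtain a where a: "\<forall>p\<in>Ps. elbow_claw p c a" using assms(1) unfolding claw_at_def by blast
  obtain a1 a2 a3 where arms: "distinct [a1, a2, a3]"
    and claw: "\<And>p. elbow_claw p c a \<longleftrightarrow>
      exactly_two (elbow_uses_arm p c a1) (elbow_uses_arm p c a2) (elbow_uses_arm p c a3)"
    by (cases a) (metis distinct_length_2_or_more distinct_singleton arm.distinct elbow_claw.simps)+
  let ?e = "\<lambda>a'. {c, arm_end c a'}"
  have "is_claw c (arm_end c a1) (arm_end c a2) (arm_end c a3)"
    using arms unfolding is_claw_def by (simp add: grid_adj_arm_end arm_end_eq_iff del: arm_end.simps)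
  moreover have "uses_two_claw_edges A c (arm_end c a1) (arm_end c a2) (arm_end c a3)" if "A \<in> As" for A
  proof -
    from assms(2) that obtain p where "p \<in> Ps" and A: "path_edges A = elbow_edges p" by blast
    then have "elbow_claw p c a" using a by blast
    then have two: "exactly_two (?e a1 \<in> elbow_edges p) (?e a2 \<in> elbow_edges p) (?e a3 \<in> elbow_edges p)"
      unfolding claw elbow_uses_arm_iff .
    have "distinct [?e a1, ?e a2, ?e a3]"
      using arms by (auto simp: doubleton_eq_iff arm_end_eq_iff arm_end_neq arm_end_neq[symmetric])
    from card_Int_three_eq_two[OF this two] show ?thesis unfolding uses_two_claw_edges_def claw_edges_def A .
  qed
  ultimately show ?thesis unfolding form_claw_clique_def by blast
qed

lemma B1_EPG_rep_S3_centre_claw_clique: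
  assumes rep: "B1_EPG_rep V E P" and S: "S3_config V E a b c p q s"
  shows "form_claw_clique {P a, P b, P c}"
proof -
  have "\<forall>v\<in>V. \<exists>e. wf_elbow e \<and> path_edges (P v) = elbow_edges e"
    using rep grid_path_at_most_one_bend_elbow unfolding B1_EPG_rep_def EPG_rep_def by metis
  then obtain el where el: "\<forall>v\<in>V. wf_elbow (el v) \<and> path_edges (P v) = elbow_edges (el v)"
    by metis
  then have share: "\<forall>u\<in>V. \<forall>v\<in>V. u \<noteq> v \<longrightarrow> ({u, v} \<in> E \<longleftrightarrow> elbows_share (el u) (el v))"
    using rep unfolding B1_EPG_rep_def EPG_rep_def by (simp flip: elbow_edges_Int_nonempty_iff)
  have V: "{a, b, c} \<subseteq> V" "distinct [a, b, c]" and "{a, b} \<in> E" "{b, c} \<in> E" "{a, c} \<in> E"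
    using S unfolding S3_config_def by auto
  then have "elbows_share (el a) (el b)" "elbows_share (el b) (el c)" "elbows_share (el a) (el c)"
    using share by auto
  then obtain z where "claw_at {el a, el b, el c} z"
    using pairwise_sharing_elbows_cases S3_elbows_no_overlap[OF S _ share] el V by blast
  then show ?thesis by (rule claw_at_imp_form_claw_clique) (use el V in auto)
qed

theorem corollary4p11:
  fixes V :: "'v set" and E :: "'v set set" and P :: "'v \<Rightarrow> (int \<times> int) list"
    and a b c :: 'v
  assumes "simple_graph V E"
    and "maximal_outerplanar V E"
    and "B1_EPG_rep V E P"
    and "a \<in> reduced_vertices V E" and "b \<in> reduced_vertices V E" and "c \<in> reduced_vertices V E"
    and "distinct [a, b, c]"
    and "{a, b} \<in> reduced_edges V E" and "{b, c} \<in> reduced_edges V E" and "{a, c} \<in> reduced_edges V E"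
  shows "form_claw_clique {P a, P b, P c}"
proof -
  have K: "K23_free V E"
    using assms(2) outerplanar_imp_K23_free unfolding maximal_outerplanar_def by blast
  obtain d1 p1 q1 s1 where S1: "S3_config V E a b d1 p1 q1 s1"
    using reduced_edge_imp_S3_config[OF assms(8)] .
  obtain d2 p2 q2 s2 where S2: "S3_config V E b c d2 p2 q2 s2"
    using reduced_edge_imp_S3_config[OF assms(9)] .
  obtain d3 p3 q3 s3 where S3: "S3_config V E c a d3 p3 q3 s3"
    using reduced_edge_imp_S3_config assms(10) by (metis insert_commute)
  obtain a' b' c' p q s where S: "S3_config V E a' b' c' p q s" and abc: "{a', b', c'} = {a, b, c}"
    using K23_free_triangle_S3_centre[OF K S1 S2 S3] .
  have "{P a', P b', P c'} = {P a, P b, P c}"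
    using arg_cong[OF abc, of "image P"] by simp
  then show ?thesis using B1_EPG_rep_S3_centre_claw_clique[OF assms(3) S] by simp
qed

end
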